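(* Assume the linear payoff assumption and the rank condition $\operatorname{rank}\begin{bmatrix}A(\nu^* )\\ B(\mu^* )\end{bmatrix}=d$. Let $\epsilon_1,\epsilon_2>0$ with $\epsilon_1<\min_{a}\mu^*(a)$ and $\epsilon_2<\min_b\nu^*(b)$. Let $\widehat\mu\in\Delta(\mathcal A)$ and $\widehat\nu\in\Delta(\mathcal B)$ satisfy $\mathrm{TV}(\widehat\mu,\mu^* )\le\epsilon_1/2$ and $\mathrm{TV}(\widehat\nu,\nu^* )\le\epsilon_2/2$. Let $$\widehat\theta\in\arg\min_{\theta\in\mathbb{R}^d}\Big\|\begin{bmatrix}A(\widehat\nu)\\ B(\widehat\mu)\end{bmatrix}\theta-\begin{bmatrix}c(\widehat\mu)\\ d(\widehat\nu)\end{bmatrix}\Big\|^2 .$$ Then there exist constants $\epsilon_0,C>0$, depending only on $\phi,\eta,\mu^*,\nu^*$, with the following property. If $\epsilon_1,\epsilon_2\le\epsilon_0$, then the least-squares minimizer is unique and $$\|\widehat\theta-\theta^*\|^2\le C\Big(\epsilon_1^2\big(1+m(\epsilon_2^2+1)\big)+\epsilon_2^2\big(1+n(\epsilon_1^2+1)\big)\Big).$$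
   Context: Let $m,n\ge 2$, $\mathcal A=\{1,\dots,m\}$, $\mathcal B=\{1,\dots,n\}$, and $\eta>0$. For a payoff matrix $Q\in\mathbb{R}^{m\times n}$, the entropy-regularized zero-sum matrix game is $$\max_{\mu\in\Delta(\mathcal A)}\min_{\nu\in\Delta(\mathcal B)}\ \mu^\top Q\nu+\eta^{-1}\mathcal H(\mu)-\eta^{-1}\mathcal H(\nu),\qquad \mathcal H(\pi)=-\sum_i\pi_i\log\pi_i .$$ Its unique saddle point, the quantal response equilibrium (QRE) $(\mu,\nu)$, is characterized by $$\mu(a)=\frac{\exp\big(\eta\sum_b Q(a,b)\nu(b)\big)}{\sum_{a'}\exp\big(\eta\sum_bQ(a',b)\nu(b)\big)},\qquad \nu(b)=\frac{\exp\big(-\eta\sum_a Q(a,b)\mu(a)\big)}{\sum_{b'}\exp\big(-\eta\sum_aQ(a,b')\mu(a)\big)}.$$ Linear payoff assumption: there are a feature map $\phi:\mathcal A\times\mathcal B\to\mathbb{R}^d$ and $\theta^*\in\mathbb{R}^d$ with $\|\theta^*\|^2\le M$ such that $Q(a,b)=\langle\phi(a,b),\theta^*\rangle$ for all $(a,b)$. $(\mu^*,\nu^* )$ denotes the QRE of this $Q$; all its entries are positive. For $\mu\in\Delta(\mathcal A)$ and $\nu\in\Delta(\mathcal B)$ with positive entries, define: - $A(\nu)\in\mathbb{R}^{(m-1)\times d}$, whose row indexed by $a=2,\dots,m$ is $\sum_{b}\nu(b)\,(\phi(a,b)-\phi(1,b))^\top$; - $B(\mu)\in\mathbb{R}^{(n-1)\times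 d}$, whose row indexed by $b=2,\dots,n$ is $\sum_a\mu(a)\,(\phi(a,b)-\phi(a,1))^\top$; - $c(\mu)=\big(\eta^{-1}\log(\mu(a)/\mu(1))\big)_{a=2}^m\in\mathbb{R}^{m-1}$; - $d(\nu)=\big(-\eta^{-1}\log(\nu(b)/\nu(1))\big)_{b=2}^n\in\mathbb{R}^{n-1}$. $\mathrm{TV}(\mu,\mu')=\tfrac12\|\mu-\mu'\|_1$. *)

theory Defs
  imports Complex_Main "Jordan_Normal_Form.Matrix" "Jordan_Normal_Form.DL_Rank"
begin

text \<open>Action sets are {1..m} and {1..n}; distributions are functions nat => real,
  only their values on the action set matter. Feature map phi a b is a vector in R^d
  (a JNF vector of dimension d).\<close>

definition simplex :: "nat \<Rightarrow> (nat \<Rightarrow> real) \<Rightarrow> bool" where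
  "simplex k p \<longleftrightarrow> (\<forall>i\<in>{1..k}. 0 \<le> p i) \<and> (\<Sum>i\<in>{1..k}. p i) = 1"

definition TV :: "nat \<Rightarrow> (nat \<Rightarrow> real) \<Rightarrow> (nat \<Rightarrow> real) \<Rightarrow> real" where
  "TV k p q = (1/2) * (\<Sum>i\<in>{1..k}. \<bar>p i - q i\<bar>)"

definition is_QRE :: "nat \<Rightarrow> nat \<Rightarrow> real \<Rightarrow> (nat \<Rightarrow> nat \<Rightarrow> real)
    \<Rightarrow> (nat \<Rightarrow> real) \<Rightarrow> (nat \<Rightarrow> real) \<Rightarrow> bool" where
  "is_QRE m n \<eta> Q \<mu> \<nu> \<longleftrightarrow> simplex m \<mu> \<and> simplex n \<nu> \<and>
     (\<forall>a\<in>{1..m}. \<mu> a = exp (\<eta> * (\<Sum>b\<in>{1..n}. Q a b * \<nu> b)) /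
        (\<Sum>a'\<in>{1..m}. exp (\<eta> * (\<Sum>b\<in>{1..n}. Q a' b * \<nu> b)))) \<and>
     (\<forall>b\<in>{1..n}. \<nu> b = exp (- \<eta> * (\<Sum>a\<in>{1..m}. Q a b * \<mu> a)) /
        (\<Sum>b'\<in>{1..n}. exp (- \<eta> * (\<Sum>a\<in>{1..m}. Q a b' * \<mu> a))))"

text \<open>A(nu): row i (i = 0..m-2) corresponds to action a = i+2.\<close>
definition matA :: "nat \<Rightarrow> nat \<Rightarrow> nat \<Rightarrow> (nat \<Rightarrow> nat \<Rightarrow> real vec) \<Rightarrow> (nat \<Rightarrow> real) \<Rightarrow> real mat" where
  "matA m n d \<phi> \<nu> = mat (m - 1) d (\<lambda>(i, j). \<Sum>b\<in>{1..n}. \<nu> b * (\<phi> (i + 2) b $ j - \<phi> 1 b $ j))"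

text \<open>B(mu): row i (i = 0..n-2) corresponds to action b = i+2.\<close>
definition matB :: "nat \<Rightarrow> nat \<Rightarrow> nat \<Rightarrow> (nat \<Rightarrow> nat \<Rightarrow> real vec) \<Rightarrow> (nat \<Rightarrow> real) \<Rightarrow> real mat" where
  "matB m n d \<phi> \<mu> = mat (n - 1) d (\<lambda>(i, j). \<Sum>a\<in>{1..m}. \<mu> a * (\<phi> a (i + 2) $ j - \<phi> a 1 $ j))"

definition vecc :: "nat \<Rightarrow> real \<Rightarrow> (nat \<Rightarrow> real) \<Rightarrow> real vec" where
  "vecc m \<eta> \<mu> = vec (m - 1) (\<lambda>i. ln (\<mu> (i + 2) / \<mu> 1) / \<eta>)"

definition vecd :: "nat \<Rightarrow> real \<Rightarrow> (nat \<Rightarrow> real) \<Rightarrow> real vec" where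
  "vecd n \<eta> \<nu> = vec (n - 1) (\<lambda>i. - (ln (\<nu> (i + 2) / \<nu> 1) / \<eta>))"

definition sqnorm :: "real vec \<Rightarrow> real" where
  "sqnorm v = (\<Sum>i<dim_vec v. (v $ i)^2)"

definition lsq_obj :: "nat \<Rightarrow> nat \<Rightarrow> nat \<Rightarrow> real \<Rightarrow> (nat \<Rightarrow> nat \<Rightarrow> real vec)
    \<Rightarrow> (nat \<Rightarrow> real) \<Rightarrow> (nat \<Rightarrow> real) \<Rightarrow> real vec \<Rightarrow> real" where
  "lsq_obj m n d \<eta> \<phi> \<mu> \<nu> \<theta> =
     sqnorm (((matA m n d \<phi> \<nu>) @\<^sub>r (matB m n d \<phi> \<mu>)) *\<^sub>v \<theta> - (vecc m \<eta> \<mu> @\<^sub>v vecd n \<eta> \<nu>))"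

definition is_lsq_min :: "nat \<Rightarrow> nat \<Rightarrow> nat \<Rightarrow> real \<Rightarrow> (nat \<Rightarrow> nat \<Rightarrow> real vec)
    \<Rightarrow> (nat \<Rightarrow> real) \<Rightarrow> (nat \<Rightarrow> real) \<Rightarrow> real vec \<Rightarrow> bool" where
  "is_lsq_min m n d \<eta> \<phi> \<mu> \<nu> \<theta> \<longleftrightarrow> \<theta> \<in> carrier_vec d \<and>
     (\<forall>\<theta>'\<in>carrier_vec d. lsq_obj m n d \<eta> \<phi> \<mu> \<nu> \<theta> \<le> lsq_obj m n d \<eta> \<phi> \<mu> \<nu> \<theta>')"

end

theory Submission
  imports Defs
begin

text \<open>
  At the equilibrium the logit equations say exactly that \<open>\<theta>*\<close> solves the linear system
  \<open>K* \<theta> = b*\<close> with \<open>K* = [A(\<nu>*); B(\<mu>*)]\<close> and \<open>b* = [c(\<mu>*); d(\<nu>*)]\<close>.  Full column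
  rank of \<open>K*\<close> gives \<open>\<lambda> > 0\<close> with \<open>\<lambda> |\<theta>|\<^sup>2 \<le> |K* \<theta>|\<^sup>2\<close>.  The empirical system
  \<open>(K, b)\<close> is an \<open>O(\<epsilon>)\<close> perturbation of \<open>(K*, b*)\<close>: the matrix depends linearly on the
  strategies, and the log-ratios in \<open>b\<close> are Lipschitz once all probabilities stay above half
  the smallest equilibrium probability.  For small \<open>\<epsilon>\<close> the perturbed matrix still satisfies
  the lower bound with \<open>\<lambda>/4\<close>, so the least-squares minimizer is unique, and comparing its
  residual with the residual of \<open>\<theta>*\<close> gives \<open>|\<theta> - \<theta>*|\<^sup>2 = O(\<epsilon>\<^sub>1\<^sup>2 + \<epsilon>\<^sub>2\<^sup>2)\<close>.
\<close>

lemma abs_ln_diff_le: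
  fixes x y q e :: real
  assumes "0 < q" "q \<le> x" "q \<le> y" "\<bar>x - y\<bar> \<le> e"
  shows "\<bar>ln x - ln y\<bar> \<le> e / q"
proof -
  have "ln x - ln y \<le> e / q"
  proof -
    have "ln x - ln y \<le> (x - y) / y" using assms by (intro ln_diff_le) auto
    also have "\<dots> \<le> e / q" using assms by (intro frac_le) auto
    finally show ?thesis .
  qed
  moreover have "ln y - ln x \<le> e / q"
  proof -
    have "ln y - ln x \<le> (y - x) / x" using assms by (intro ln_diff_le) auto
    also have "\<dots> \<le> e / q" using assms by (intro frac_le) auto
    finally show ?thesis .
  qed
  ultimately show ?thesis by linarith
qed

lemma abs_ln_ratio_diff_le:
  fixes x1 x2 y1 y2 q e :: real
  assumes "0 < q" "q \<le> x1" "q \<le> x2" "q \<le> y1" "q \<le> y2"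
    and "\<bar>x1 - y1\<bar> \<le> e" "\<bar>x2 - y2\<bar> \<le> e"
  shows "\<bar>ln (x1 / x2) - ln (y1 / y2)\<bar> \<le> 2 * e / q"
proof -
  have "ln (x1 / x2) - ln (y1 / y2) = (ln x1 - ln y1) - (ln x2 - ln y2)"
    using assms by (simp add: ln_div)
  moreover have "\<bar>ln x1 - ln y1\<bar> \<le> e / q" "\<bar>ln x2 - ln y2\<bar> \<le> e / q"
    using assms by (auto intro: abs_ln_diff_le)
  ultimately show ?thesis by simp
qed

lemma abs_sum_mult_le:
  fixes f g :: "'a \<Rightarrow> real"
  assumes "\<And>x. x \<in> S \<Longrightarrow> \<bar>g x\<bar> \<le> B"
  shows "\<bar>\<Sum>x\<in>S. f x * g x\<bar> \<le> (\<Sum>x\<in>S. \<bar>f x\<bar>) * B"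
proof -
  have "\<bar>\<Sum>x\<in>S. f x * g x\<bar> \<le> (\<Sum>x\<in>S. \<bar>f x\<bar> * \<bar>g x\<bar>)"
    using sum_abs[of "\<lambda>x. f x * g x" S] by (simp add: abs_mult)
  also have "\<dots> \<le> (\<Sum>x\<in>S. \<bar>f x\<bar> * B)"
    using assms by (intro sum_mono mult_left_mono) auto
  finally show ?thesis by (simp add: sum_distrib_right)
qed

lemma square_sum_le_card_mult:
  fixes x :: "'a \<Rightarrow> real"
  shows "(\<Sum>i\<in>S. x i)\<^sup>2 \<le> real (card S) * (\<Sum>i\<in>S. (x i)\<^sup>2)"
proof -
  have "(\<Sum>i\<in>S. x i)\<^sup>2 = (\<Sum>i\<in>S. \<Sum>j\<in>S. x i * x j)"
    by (simp add: power2_eq_square sum_product)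
  also have "\<dots> \<le> (\<Sum>i\<in>S. \<Sum>j\<in>S. (x i)\<^sup>2 / 2 + (x j)\<^sup>2 / 2)"
  proof (intro sum_mono)
    fix i j
    show "x i * x j \<le> (x i)\<^sup>2 / 2 + (x j)\<^sup>2 / 2"
      using zero_le_power2[of "x i - x j"] by (simp add: power2_eq_square algebra_simps)
  qed
  also have "\<dots> = real (card S) * (\<Sum>i\<in>S. (x i)\<^sup>2)"
    by (simp add: sum.distrib sum_distrib_left[symmetric] sum_divide_distrib[symmetric] sum.swap[of _ S S])
  finally show ?thesis .
qed

lemma finite_imp_abs_bounded:
  fixes f :: "'a \<Rightarrow> real"
  assumes "finite S"
  shows "\<exists>B\<ge>0. \<forall>x\<in>S. \<bar>f x\<bar> \<le> B"
  using assms by (intro exI[of _ "\<Sum>x\<in>S. \<bar>f x\<bar>"]) (auto intro: sum_nonneg member_le_sum)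

lemma square_le_of_abs_le:
  fixes x e :: real
  shows "\<bar>x\<bar> \<le> e \<Longrightarrow> x\<^sup>2 \<le> e\<^sup>2"
  using power_mono[of "\<bar>x\<bar>" e 2] by simp

lemma sqnorm_nonneg: "0 \<le> sqnorm v"
  unfolding sqnorm_def by (simp add: sum_nonneg)

lemma sqnorm_eq_scalar_prod: "sqnorm v = v \<bullet> v"
  unfolding sqnorm_def scalar_prod_def by (simp add: atLeast0LessThan power2_eq_square)

lemma sqnorm_eq_0_iff: "sqnorm v = 0 \<longleftrightarrow> v = 0\<^sub>v (dim_vec v)"
proof
  assume "sqnorm v = 0"
  then have "\<forall>i<dim_vec v. v $ i = 0"
    unfolding sqnorm_def by (subst (asm) sum_nonneg_eq_0_iff) auto
  then show "v = 0\<^sub>v (dim_vec v)" by (intro eq_vecI) auto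
next
  assume v: "v = 0\<^sub>v (dim_vec v)"
  have "\<And>i. i < dim_vec v \<Longrightarrow> v $ i = 0" by (subst v) simp
  then show "sqnorm v = 0" unfolding sqnorm_def by simp
qed

lemma sqnorm_append_vec: "sqnorm (v @\<^sub>v w) = sqnorm v + sqnorm w"
proof -
  let ?f = "\<lambda>i. ((v @\<^sub>v w) $ i)\<^sup>2"
  have "sqnorm (v @\<^sub>v w) = (\<Sum>i<dim_vec v. ?f i) + (\<Sum>i=dim_vec v..<dim_vec v + dim_vec w. ?f i)"
    unfolding sqnorm_def
    using sum.atLeastLessThan_concat[of 0 "dim_vec v" "dim_vec v + dim_vec w" ?f]
    by (simp add: atLeast0LessThan)
  also have "(\<Sum>i=dim_vec v..<dim_vec v + dim_vec w. ?f i) = (\<Sum>i<dim_vec w. ?f (i + dim_vec v))"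
    using sum.shift_bounds_nat_ivl[of ?f 0 "dim_vec v" "dim_vec w"]
    by (simp add: atLeast0LessThan add.commute)
  finally show ?thesis unfolding sqnorm_def by simp
qed

lemma sqnorm_add_le:
  assumes "x \<in> carrier_vec r" "y \<in> carrier_vec r"
  shows "sqnorm (x + y) \<le> 2 * sqnorm x + 2 * sqnorm y"
proof -
  have sq: "(a + b)\<^sup>2 \<le> 2 * a\<^sup>2 + 2 * b\<^sup>2" for a b :: real
    using zero_le_power2[of "a - b"] by (simp add: power2_eq_square algebra_simps)
  have "sqnorm (x + y) = (\<Sum>i<r. (x $ i + y $ i)\<^sup>2)" using assms by (simp add: sqnorm_def)
  also have "\<dots> \<le> (\<Sum>i<r. 2 * (x $ i)\<^sup>2 + 2 * (y $ i)\<^sup>2)" by (intro sum_mono sq)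
  also have "\<dots> = 2 * sqnorm x + 2 * sqnorm y"
    using assms by (simp add: sqnorm_def sum.distrib sum_distrib_left)
  finally show ?thesis .
qed

lemma sqnorm_diff_triangle:
  assumes "x \<in> carrier_vec r" "y \<in> carrier_vec r" "z \<in> carrier_vec r"
  shows "sqnorm (x - z) \<le> 2 * sqnorm (x - y) + 2 * sqnorm (y - z)"
proof -
  have "x - z = (x - y) + (y - z)" using assms by (intro eq_vecI) auto
  then show ?thesis using sqnorm_add_le[of "x - y" r "y - z"] assms by simp
qed

lemma sqnorm_diff_commute:
  assumes "x \<in> carrier_vec r" "y \<in> carrier_vec r"
  shows "sqnorm (x - y) = sqnorm (y - x)"
  unfolding sqnorm_def using assms by (intro sum.cong) (auto simp: power2_commute)

lemma sqnorm_diff_le_entrywise: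
  assumes "v \<in> carrier_vec r" "w \<in> carrier_vec r" "\<And>i. i < r \<Longrightarrow> \<bar>v $ i - w $ i\<bar> \<le> e"
  shows "sqnorm (v - w) \<le> real r * e\<^sup>2"
proof -
  have "sqnorm (v - w) = (\<Sum>i<r. (v $ i - w $ i)\<^sup>2)" unfolding sqnorm_def using assms by simp
  also have "\<dots> \<le> (\<Sum>i<r. e\<^sup>2)"
    using assms(3) by (intro sum_mono square_le_of_abs_le) auto
  finally show ?thesis by simp
qed

lemma sqnorm_mult_mat_vec_le:
  assumes A: "A \<in> carrier_mat r c" and \<theta>: "\<theta> \<in> carrier_vec c"
    and e: "\<And>i j. i < r \<Longrightarrow> j < c \<Longrightarrow> \<bar>A $$ (i, j)\<bar> \<le> e"
  shows "sqnorm (A *\<^sub>v \<theta>) \<le> real r * real c * e\<^sup>2 * sqnorm \<theta>"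
proof -
  have row: "((A *\<^sub>v \<theta>) $ i)\<^sup>2 \<le> real c * e\<^sup>2 * sqnorm \<theta>" if i: "i < r" for i
  proof -
    have "((A *\<^sub>v \<theta>) $ i)\<^sup>2 = (\<Sum>j<c. A $$ (i, j) * \<theta> $ j)\<^sup>2"
      using A \<theta> i by (simp add: scalar_prod_def atLeast0LessThan)
    also have "\<dots> \<le> real c * (\<Sum>j<c. (A $$ (i, j) * \<theta> $ j)\<^sup>2)"
      using square_sum_le_card_mult[of _ "{..<c}"] by simp
    also have "\<dots> \<le> real c * (\<Sum>j<c. e\<^sup>2 * (\<theta> $ j)\<^sup>2)"
    proof (intro mult_left_mono sum_mono)
      fix j assume "j \<in> {..<c}"
      then have "(A $$ (i, j))\<^sup>2 \<le> e\<^sup>2" using e[OF i] by (intro square_le_of_abs_le) auto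
      then show "(A $$ (i, j) * \<theta> $ j)\<^sup>2 \<le> e\<^sup>2 * (\<theta> $ j)\<^sup>2"
        by (simp add: power_mult_distrib mult_right_mono)
    qed simp
    also have "\<dots> = real c * e\<^sup>2 * sqnorm \<theta>"
      using \<theta> by (simp add: sqnorm_def sum_distrib_left mult.assoc)
    finally show ?thesis .
  qed
  have "sqnorm (A *\<^sub>v \<theta>) = (\<Sum>i<r. ((A *\<^sub>v \<theta>) $ i)\<^sup>2)" using A by (simp add: sqnorm_def)
  also have "\<dots> \<le> (\<Sum>i<r. real c * e\<^sup>2 * sqnorm \<theta>)" using row by (intro sum_mono) auto
  also have "\<dots> = real r * real c * e\<^sup>2 * sqnorm \<theta>" by (simp add: mult.assoc)
  finally show ?thesis .
qed

lemma append_vec_diff: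
  assumes "v \<in> carrier_vec n" "v' \<in> carrier_vec n" "w \<in> carrier_vec m" "w' \<in> carrier_vec m"
  shows "(v @\<^sub>v w) - (v' @\<^sub>v w') = (v - v') @\<^sub>v (w - w')"
  using assms by (intro eq_vecI) auto

section \<open>Least squares with an injective matrix\<close>

text \<open>The rectangular version of \<open>non_distinct_low_rank\<close>, which DL_Rank states for square matrices.\<close>

lemma (in vec_space) non_distinct_cols_rank_less:
  assumes "A \<in> carrier_mat n nc" and "\<not> distinct (cols A)"
  shows "rank A < nc"
proof -
  obtain S where S: "maximal S (\<lambda>T. T \<subseteq> set (cols A) \<and> lin_indpt T)"
    using maximal_exists[of "\<lambda>T. T \<subseteq> set (cols A) \<and> lin_indpt T" "card (set (cols A))" "{}"]
    by (meson List.finite_set card_mono empty_iff empty_subsetI finite_lin_indpt2 rev_finite_subset)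
  then have "card S \<le> card (set (cols A))" by (simp add: card_mono maximal_def)
  also have "\<dots> < nc"
    using assms cols_length card_length card_distinct carrier_matD(2) nat_less_le by metis
  finally show ?thesis using rank_card_indpt[OF assms(1) S] by simp
qed

lemma full_column_rank_mult_vec_eq_0:
  fixes K :: "'a :: field mat"
  assumes K: "K \<in> carrier_mat N d" and rank: "vec_space.rank N K = d"
    and v: "v \<in> carrier_vec d" and Kv: "K *\<^sub>v v = 0\<^sub>v N"
  shows "v = 0\<^sub>v d"
proof (rule ccontr)
  assume nz: "v \<noteq> 0\<^sub>v d"
  have "distinct (cols K)"
    using vec_space.non_distinct_cols_rank_less[OF K] rank by fastforce
  then show False
    using vec_space.full_rank_lin_indpt[OF K rank] vec_space.lin_depI[OF K v nz Kv] by blast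
qed

lemma gram_mat_invertible:
  fixes K :: "real mat"
  assumes K: "K \<in> carrier_mat N d"
    and inj: "\<And>v. v \<in> carrier_vec d \<Longrightarrow> K *\<^sub>v v = 0\<^sub>v N \<Longrightarrow> v = 0\<^sub>v d"
  obtains G' where "G' \<in> carrier_mat d d" "G' * (K\<^sup>T * K) = 1\<^sub>m d" "(K\<^sup>T * K) * G' = 1\<^sub>m d"
proof -
  define G where "G = K\<^sup>T * K"
  have G: "G \<in> carrier_mat d d" unfolding G_def using K by auto
  have "det G \<noteq> 0"
  proof
    assume "det G = 0"
    then obtain v where v: "v \<in> carrier_vec d" "v \<noteq> 0\<^sub>v d" "G *\<^sub>v v = 0\<^sub>v d"
      using det_0_iff_vec_prod_zero_field[OF G] by blast
    have "sqnorm (K *\<^sub>v v) = (K\<^sup>T *\<^sub>v (K *\<^sub>v v)) \<bullet> v"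
      using transpose_vec_mult_scalar[OF K v(1), of "K *\<^sub>v v"] K v
      by (simp add: sqnorm_eq_scalar_prod)
    also have "\<dots> = (G *\<^sub>v v) \<bullet> v" unfolding G_def using K v by simp
    also have "\<dots> = 0" using v by simp
    finally have "K *\<^sub>v v = 0\<^sub>v N" using K by (simp add: sqnorm_eq_0_iff)
    with inj v show False by blast
  qed
  define G' where "G' = (1 / det G) \<cdot>\<^sub>m adj_mat G"
  have adj: "adj_mat G \<in> carrier_mat d d" "G * adj_mat G = det G \<cdot>\<^sub>m 1\<^sub>m d"
      "adj_mat G * G = det G \<cdot>\<^sub>m 1\<^sub>m d"
    using adj_mat[OF G] by auto
  have one: "(1 / det G) \<cdot>\<^sub>m (det G \<cdot>\<^sub>m 1\<^sub>m d) = (1\<^sub>m d :: real mat)"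
    using \<open>det G \<noteq> 0\<close> by (intro eq_matI) auto
  show thesis
  proof
    show "G' \<in> carrier_mat d d" unfolding G'_def using adj by simp
    show "G' * (K\<^sup>T * K) = 1\<^sub>m d"
      unfolding G'_def G_def[symmetric] using mult_smult_assoc_mat[OF adj(1) G] adj one by simp
    show "(K\<^sup>T * K) * G' = 1\<^sub>m d"
      unfolding G'_def G_def[symmetric] using mult_smult_distrib[OF G adj(1)] adj one by simp
  qed
qed

lemma injective_mat_sqnorm_lower_bound:
  fixes K :: "real mat"
  assumes K: "K \<in> carrier_mat N d"
    and inj: "\<And>v. v \<in> carrier_vec d \<Longrightarrow> K *\<^sub>v v = 0\<^sub>v N \<Longrightarrow> v = 0\<^sub>v d"
  obtains lam where "0 < lam" "\<forall>\<theta>\<in>carrier_vec d. lam * sqnorm \<theta> \<le> sqnorm (K *\<^sub>v \<theta>)"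
proof -
  obtain G' where G': "G' \<in> carrier_mat d d" "G' * (K\<^sup>T * K) = 1\<^sub>m d"
    using gram_mat_invertible[OF K inj] by blast
  define L where "L = G' * K\<^sup>T"
  have L: "L \<in> carrier_mat d N" unfolding L_def using G' K by auto
  have LK: "L * K = 1\<^sub>m d" unfolding L_def using G' K by auto
  obtain e where e: "\<forall>(i, j)\<in>{..<d} \<times> {..<N}. \<bar>L $$ (i, j)\<bar> \<le> e"
    using finite_imp_abs_bounded[of "{..<d} \<times> {..<N}" "\<lambda>(i, j). L $$ (i, j)"] by auto
  define lam where "lam = 1 / (real d * real N * e\<^sup>2 + 1)"
  have pos: "0 < real d * real N * e\<^sup>2 + 1" by (simp add: add_nonneg_pos)
  have "lam * sqnorm \<theta> \<le> sqnorm (K *\<^sub>v \<theta>)" if \<theta>: "\<theta> \<in> carrier_vec d" for \<theta>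
  proof -
    have "\<theta> = L *\<^sub>v (K *\<^sub>v \<theta>)"
      using LK L K \<theta> by (metis assoc_mult_mat_vec one_mult_mat_vec)
    then have "sqnorm \<theta> \<le> real d * real N * e\<^sup>2 * sqnorm (K *\<^sub>v \<theta>)"
      using sqnorm_mult_mat_vec_le[OF L, of "K *\<^sub>v \<theta>" e] e K \<theta> by auto
    then have "sqnorm \<theta> \<le> (real d * real N * e\<^sup>2 + 1) * sqnorm (K *\<^sub>v \<theta>)"
      using sqnorm_nonneg[of "K *\<^sub>v \<theta>"] by (simp add: distrib_right)
    then show ?thesis unfolding lam_def using pos by (simp add: field_simps)
  qed
  moreover have "0 < lam" unfolding lam_def using pos by simp
  ultimately show thesis using that by blast
qed

definition lsq_minimizer :: "real mat \<Rightarrow> real vec \<Rightarrow> real vec \<Rightarrow> bool" where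
  "lsq_minimizer K b \<theta> \<longleftrightarrow> \<theta> \<in> carrier_vec (dim_col K) \<and>
     (\<forall>\<theta>'\<in>carrier_vec (dim_col K). sqnorm (K *\<^sub>v \<theta> - b) \<le> sqnorm (K *\<^sub>v \<theta>' - b))"

lemma lsq_residual_pythagoras:
  fixes K :: "real mat"
  assumes K: "K \<in> carrier_mat N d" and b: "b \<in> carrier_vec N"
    and t: "t \<in> carrier_vec d" and normal: "K\<^sup>T *\<^sub>v (K *\<^sub>v t) = K\<^sup>T *\<^sub>v b"
    and \<theta>: "\<theta> \<in> carrier_vec d"
  shows "sqnorm (K *\<^sub>v \<theta> - b) = sqnorm (K *\<^sub>v (\<theta> - t)) + sqnorm (K *\<^sub>v t - b)"
proof -
  define u where "u = K *\<^sub>v (\<theta> - t)"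
  define w where "w = K *\<^sub>v t - b"
  have u: "u \<in> carrier_vec N" and w: "w \<in> carrier_vec N"
    unfolding u_def w_def using K t \<theta> b by auto
  have split: "K *\<^sub>v \<theta> - b = u + w"
    unfolding u_def w_def using mult_minus_distrib_mat_vec[OF K \<theta> t] K t \<theta> b
    by (intro eq_vecI) auto
  have "K\<^sup>T *\<^sub>v w = 0\<^sub>v d"
    unfolding w_def using mult_minus_distrib_mat_vec[of "K\<^sup>T" d N "K *\<^sub>v t" b] normal K t b by auto
  then have "u \<bullet> w = 0"
    unfolding u_def using transpose_vec_mult_scalar[OF K _ w, of "\<theta> - t"] t \<theta> w K
    by (simp add: comm_scalar_prod[of _ N w])
  have "sqnorm (u + w) = sqnorm u + sqnorm w + 2 * (u \<bullet> w)"
    using u w by (simp add: sqnorm_eq_scalar_prod add_scalar_prod_distrib scalar_prod_add_distrib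
        comm_scalar_prod[of w N u])
  then show ?thesis using split \<open>u \<bullet> w = 0\<close> unfolding u_def w_def by simp
qed

lemma lsq_minimizer_unique:
  fixes K :: "real mat"
  assumes K: "K \<in> carrier_mat N d" and b: "b \<in> carrier_vec N"
    and inj: "\<And>v. v \<in> carrier_vec d \<Longrightarrow> K *\<^sub>v v = 0\<^sub>v N \<Longrightarrow> v = 0\<^sub>v d"
  shows "\<exists>!\<theta>. lsq_minimizer K b \<theta>"
proof -
  obtain G' where G': "G' \<in> carrier_mat d d" "(K\<^sup>T * K) * G' = 1\<^sub>m d"
    using gram_mat_invertible[OF K inj] by blast
  define t where "t = G' *\<^sub>v (K\<^sup>T *\<^sub>v b)"
  have t: "t \<in> carrier_vec d" unfolding t_def using G' K b by simp
  have "K\<^sup>T *\<^sub>v (K *\<^sub>v t) = (K\<^sup>T * K) *\<^sub>v t" using K t by simp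
  also have "\<dots> = ((K\<^sup>T * K) * G') *\<^sub>v (K\<^sup>T *\<^sub>v b)"
    unfolding t_def using K G' b by (metis assoc_mult_mat_vec mult_carrier_mat
        transpose_carrier_mat mult_mat_vec_carrier)
  also have "\<dots> = K\<^sup>T *\<^sub>v b" using G' K b by simp
  finally have pyth: "\<And>\<theta>. \<theta> \<in> carrier_vec d \<Longrightarrow>
      sqnorm (K *\<^sub>v \<theta> - b) = sqnorm (K *\<^sub>v (\<theta> - t)) + sqnorm (K *\<^sub>v t - b)"
    by (rule lsq_residual_pythagoras[OF K b t])
  have dim: "dim_col K = d" using carrier_matD(2)[OF K] .
  show ?thesis
  proof (rule ex1I[of _ t])
    show "lsq_minimizer K b t"
      unfolding lsq_minimizer_def dim
    proof (intro conjI ballI t)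
      fix \<theta>' :: "real vec" assume "\<theta>' \<in> carrier_vec d"
      from pyth[OF this] sqnorm_nonneg[of "K *\<^sub>v (\<theta>' - t)"]
      show "sqnorm (K *\<^sub>v t - b) \<le> sqnorm (K *\<^sub>v \<theta>' - b)" by linarith
    qed
  next
    fix \<theta> assume "lsq_minimizer K b \<theta>"
    then have \<theta>: "\<theta> \<in> carrier_vec d" and "sqnorm (K *\<^sub>v \<theta> - b) \<le> sqnorm (K *\<^sub>v t - b)"
      unfolding lsq_minimizer_def dim using t by auto
    then have "sqnorm (K *\<^sub>v (\<theta> - t)) = 0"
      using pyth[OF \<theta>] sqnorm_nonneg[of "K *\<^sub>v (\<theta> - t)"] by linarith
    then have "\<theta> - t = 0\<^sub>v d" using inj \<theta> t K by (simp add: sqnorm_eq_0_iff)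
    have "\<theta> $ i = t $ i" if "i < d" for i
    proof -
      have "(\<theta> - t) $ i = 0" using \<open>\<theta> - t = 0\<^sub>v d\<close> that by simp
      then show ?thesis using that carrier_vecD[OF \<theta>] carrier_vecD[OF t] by simp
    qed
    then show "\<theta> = t" using \<theta> t by (intro eq_vecI) auto
  qed
qed

lemma lsq_minimizer_dist_le:
  fixes K :: "real mat"
  assumes K: "K \<in> carrier_mat N d" and b: "b \<in> carrier_vec N"
    and lower: "\<forall>\<theta>\<in>carrier_vec d. lam * sqnorm \<theta> \<le> sqnorm (K *\<^sub>v \<theta>)"
    and min: "lsq_minimizer K b \<theta>" and \<theta>0: "\<theta>0 \<in> carrier_vec d"
  shows "lam * sqnorm (\<theta> - \<theta>0) \<le> 4 * sqnorm (K *\<^sub>v \<theta>0 - b)"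
proof -
  have \<theta>: "\<theta> \<in> carrier_vec d" and opt: "sqnorm (K *\<^sub>v \<theta> - b) \<le> sqnorm (K *\<^sub>v \<theta>0 - b)"
    using min \<theta>0 K unfolding lsq_minimizer_def by auto
  have "\<theta> - \<theta>0 \<in> carrier_vec d" using \<theta> \<theta>0 by simp
  then have "lam * sqnorm (\<theta> - \<theta>0) \<le> sqnorm (K *\<^sub>v \<theta> - K *\<^sub>v \<theta>0)"
    using lower unfolding mult_minus_distrib_mat_vec[OF K \<theta> \<theta>0, symmetric] by blast
  also have "\<dots> \<le> 2 * sqnorm (K *\<^sub>v \<theta> - b) + 2 * sqnorm (b - K *\<^sub>v \<theta>0)"
    using K \<theta> \<theta>0 b by (intro sqnorm_diff_triangle[where r = N]) auto
  also have "\<dots> \<le> 4 * sqnorm (K *\<^sub>v \<theta>0 - b)"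
    using opt sqnorm_diff_commute[of b N "K *\<^sub>v \<theta>0"] K \<theta>0 b by simp
  finally show ?thesis .
qed

lemma sqnorm_lower_bound_perturb:
  assumes u: "u \<in> carrier_vec N" and u': "u' \<in> carrier_vec N" and "0 \<le> c"
    and "c \<le> sqnorm u" and "sqnorm (u' - u) \<le> c / 8"
  shows "c / 4 \<le> sqnorm u'"
proof -
  have "sqnorm u \<le> 2 * sqnorm (u - u') + 2 * sqnorm u'"
    using sqnorm_diff_triangle[OF u u' zero_carrier_vec[of N]] u u' by simp
  then show ?thesis using assms(3-5) sqnorm_diff_commute[OF u u'] by linarith
qed

lemma lsq_perturbation_bound:
  fixes K K' :: "real mat"
  assumes K: "K \<in> carrier_mat N d" and K': "K' \<in> carrier_mat N d"
    and b': "b' \<in> carrier_vec N" and \<theta>s: "\<theta>s \<in> carrier_vec d"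
    and lam: "0 < lam" and lower: "\<forall>\<theta>\<in>carrier_vec d. lam * sqnorm \<theta> \<le> sqnorm (K *\<^sub>v \<theta>)"
    and close: "\<forall>\<theta>\<in>carrier_vec d. sqnorm (K' *\<^sub>v \<theta> - K *\<^sub>v \<theta>) \<le> \<delta> * sqnorm \<theta>"
    and \<delta>: "\<delta> \<le> lam / 8"
  shows "\<exists>!\<theta>. lsq_minimizer K' b' \<theta>"
    and "lsq_minimizer K' b' \<theta>h \<Longrightarrow>
         sqnorm (\<theta>h - \<theta>s) \<le> 32 / lam * (\<delta> * sqnorm \<theta>s + sqnorm (b' - K *\<^sub>v \<theta>s))"
proof -
  have lower': "lam / 4 * sqnorm \<theta> \<le> sqnorm (K' *\<^sub>v \<theta>)" if \<theta>: "\<theta> \<in> carrier_vec d" for \<theta>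
  proof -
    have "sqnorm (K' *\<^sub>v \<theta> - K *\<^sub>v \<theta>) \<le> \<delta> * sqnorm \<theta>" using close \<theta> by blast
    also have "\<dots> \<le> lam * sqnorm \<theta> / 8" using mult_right_mono[OF \<delta> sqnorm_nonneg[of \<theta>]] by simp
    finally have "lam * sqnorm \<theta> / 4 \<le> sqnorm (K' *\<^sub>v \<theta>)"
      using K K' \<theta> lower lam sqnorm_nonneg[of \<theta>] by (intro sqnorm_lower_bound_perturb[of _ N]) auto
    then show ?thesis by simp
  qed
  have inj: "v = 0\<^sub>v d" if v: "v \<in> carrier_vec d" and "K' *\<^sub>v v = 0\<^sub>v N" for v
  proof -
    have "lam / 4 * sqnorm v \<le> 0" using lower'[OF v] \<open>K' *\<^sub>v v = 0\<^sub>v N\<close> by (simp add: sqnorm_def)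
    then have "sqnorm v = 0" using lam sqnorm_nonneg[of v] by (simp add: mult_le_0_iff)
    then show ?thesis using v by (simp add: sqnorm_eq_0_iff)
  qed
  show "\<exists>!\<theta>. lsq_minimizer K' b' \<theta>" by (rule lsq_minimizer_unique[OF K' b' inj])
  assume min: "lsq_minimizer K' b' \<theta>h"
  have "lam / 4 * sqnorm (\<theta>h - \<theta>s) \<le> 4 * sqnorm (K' *\<^sub>v \<theta>s - b')"
    using lsq_minimizer_dist_le[OF K' b' _ min \<theta>s] lower' by blast
  also have "\<dots> \<le> 4 * (2 * sqnorm (K' *\<^sub>v \<theta>s - K *\<^sub>v \<theta>s) + 2 * sqnorm (K *\<^sub>v \<theta>s - b'))"
    using K K' \<theta>s b' by (intro mult_left_mono sqnorm_diff_triangle[where r = N]) auto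
  also have "\<dots> \<le> 8 * (\<delta> * sqnorm \<theta>s + sqnorm (b' - K *\<^sub>v \<theta>s))"
    using close \<theta>s sqnorm_diff_commute[of "K *\<^sub>v \<theta>s" N b'] K \<theta>s b' by fastforce
  finally have "lam * sqnorm (\<theta>h - \<theta>s) \<le> 32 * (\<delta> * sqnorm \<theta>s + sqnorm (b' - K *\<^sub>v \<theta>s))"
    by simp
  then show "sqnorm (\<theta>h - \<theta>s) \<le> 32 / lam * (\<delta> * sqnorm \<theta>s + sqnorm (b' - K *\<^sub>v \<theta>s))"
    using lam by (simp add: pos_le_divide_eq mult.commute)
qed

section \<open>The linear system of a quantal response equilibrium\<close>

lemma QRE_max_player_eq:
  assumes "is_QRE m n \<eta> Q \<mu> \<nu>" "a \<in> {1..m}"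
  shows "\<mu> a = exp (\<eta> * (\<Sum>b\<in>{1..n}. Q a b * \<nu> b)) /
    (\<Sum>a'\<in>{1..m}. exp (\<eta> * (\<Sum>b\<in>{1..n}. Q a' b * \<nu> b)))"
proof -
  have "\<forall>a\<in>{1..m}. \<mu> a = exp (\<eta> * (\<Sum>b\<in>{1..n}. Q a b * \<nu> b)) /
      (\<Sum>a'\<in>{1..m}. exp (\<eta> * (\<Sum>b\<in>{1..n}. Q a' b * \<nu> b)))"
    using assms(1) unfolding is_QRE_def by (elim conjE) assumption
  then show ?thesis using assms(2) by (rule bspec)
qed

lemma QRE_min_player_eq:
  assumes "is_QRE m n \<eta> Q \<mu> \<nu>" "b \<in> {1..n}"
  shows "\<nu> b = exp (- \<eta> * (\<Sum>a\<in>{1..m}. Q a b * \<mu> a)) /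
    (\<Sum>b'\<in>{1..n}. exp (- \<eta> * (\<Sum>a\<in>{1..m}. Q a b' * \<mu> a)))"
proof -
  have "\<forall>b\<in>{1..n}. \<nu> b = exp (- \<eta> * (\<Sum>a\<in>{1..m}. Q a b * \<mu> a)) /
      (\<Sum>b'\<in>{1..n}. exp (- \<eta> * (\<Sum>a\<in>{1..m}. Q a b' * \<mu> a)))"
    using assms(1) unfolding is_QRE_def by (elim conjE) assumption
  then show ?thesis using assms(2) by (rule bspec)
qed

lemma QRE_pos:
  assumes "is_QRE m n \<eta> Q \<mu> \<nu>"
  shows "\<forall>a\<in>{1..m}. 0 < \<mu> a" and "\<forall>b\<in>{1..n}. 0 < \<nu> b"
proof -
  show "\<forall>a\<in>{1..m}. 0 < \<mu> a"
  proof
    fix a assume a: "a \<in> {1..m}"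
    have "0 < (\<Sum>a'\<in>{1..m}. exp (\<eta> * (\<Sum>b\<in>{1..n}. Q a' b * \<nu> b)))"
      using a by (intro sum_pos) auto
    then show "0 < \<mu> a" unfolding QRE_max_player_eq[OF assms a] by (rule divide_pos_pos[OF exp_gt_zero])
  qed
  show "\<forall>b\<in>{1..n}. 0 < \<nu> b"
  proof
    fix b assume b: "b \<in> {1..n}"
    have "0 < (\<Sum>b'\<in>{1..n}. exp (- \<eta> * (\<Sum>a\<in>{1..m}. Q a b' * \<mu> a)))"
      using b by (intro sum_pos) auto
    then show "0 < \<nu> b" unfolding QRE_min_player_eq[OF assms b] by (rule divide_pos_pos[OF exp_gt_zero])
  qed
qed

lemma QRE_pos_lower_bound:
  assumes "is_QRE m n \<eta> Q \<mu> \<nu>"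
  obtains p where "0 < p" "\<forall>a\<in>{1..m}. p \<le> \<mu> a" "\<forall>b\<in>{1..n}. p \<le> \<nu> b"
proof
  let ?S = "insert 1 (\<mu> ` {1..m} \<union> \<nu> ` {1..n})"
  show "0 < Min ?S" using QRE_pos[OF assms] by (subst Min_gr_iff) auto
  show "\<forall>a\<in>{1..m}. Min ?S \<le> \<mu> a" "\<forall>b\<in>{1..n}. Min ?S \<le> \<nu> b"
    by (intro ballI Min_le; simp)+
qed

lemma ln_softmax_ratio:
  fixes c s t Z :: real
  assumes "0 < Z" "c \<noteq> 0"
  shows "ln ((exp (c * s) / Z) / (exp (c * t) / Z)) / c = s - t"
proof -
  have "(exp (c * s) / Z) / (exp (c * t) / Z) = exp (c * (s - t))"
    using assms by (simp add: exp_diff right_diff_distrib)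
  then show ?thesis using assms by simp
qed

lemma dim_matA [simp]: "dim_row (matA m n d \<phi> \<nu>) = m - 1" "dim_col (matA m n d \<phi> \<nu>) = d"
  by (simp_all add: matA_def)

lemma dim_matB [simp]: "dim_row (matB m n d \<phi> \<mu>) = n - 1" "dim_col (matB m n d \<phi> \<mu>) = d"
  by (simp_all add: matB_def)

lemma matA_carrier: "matA m n d \<phi> \<nu> \<in> carrier_mat (m - 1) d"
  by (rule carrier_matI) simp_all

lemma matB_carrier: "matB m n d \<phi> \<mu> \<in> carrier_mat (n - 1) d"
  by (rule carrier_matI) simp_all

lemma vecc_carrier: "vecc m \<eta> \<mu> \<in> carrier_vec (m - 1)"
  unfolding vecc_def by (rule vec_carrier)

lemma vecd_eq_vecc: "vecd n \<eta> \<nu> = vecc n (- \<eta>) \<nu>"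
  by (simp add: vecd_def vecc_def)

lemma matA_mult_vec_index:
  assumes i: "i < m - 1" and \<theta>: "\<theta> \<in> carrier_vec d"
  shows "(matA m n d \<phi> \<nu> *\<^sub>v \<theta>) $ i = (\<Sum>b\<in>{1..n}. \<nu> b * (\<phi> (i + 2) b \<bullet> \<theta> - \<phi> 1 b \<bullet> \<theta>))"
proof -
  have "(matA m n d \<phi> \<nu> *\<^sub>v \<theta>) $ i
      = (\<Sum>j<d. (\<Sum>b\<in>{1..n}. \<nu> b * (\<phi> (i + 2) b $ j - \<phi> 1 b $ j)) * \<theta> $ j)"
    using i carrier_vecD[OF \<theta>] by (simp add: matA_def scalar_prod_def atLeast0LessThan)
  also have "\<dots> = (\<Sum>b\<in>{1..n}. \<Sum>j<d. \<nu> b * ((\<phi> (i + 2) b $ j - \<phi> 1 b $ j) * \<theta> $ j))"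
    unfolding sum_distrib_right by (subst sum.swap) (simp add: mult.assoc)
  also have "\<dots> = (\<Sum>b\<in>{1..n}. \<nu> b * (\<phi> (i + 2) b \<bullet> \<theta> - \<phi> 1 b \<bullet> \<theta>))"
  proof (rule sum.cong[OF refl])
    fix b
    have "\<phi> (i + 2) b \<bullet> \<theta> - \<phi> 1 b \<bullet> \<theta> = (\<Sum>j<d. (\<phi> (i + 2) b $ j - \<phi> 1 b $ j) * \<theta> $ j)"
      using carrier_vecD[OF \<theta>]
      by (simp add: scalar_prod_def atLeast0LessThan left_diff_distrib sum_subtractf)
    then show "(\<Sum>j<d. \<nu> b * ((\<phi> (i + 2) b $ j - \<phi> 1 b $ j) * \<theta> $ j))
        = \<nu> b * (\<phi> (i + 2) b \<bullet> \<theta> - \<phi> 1 b \<bullet> \<theta>)"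
      by (simp add: sum_distrib_left)
  qed
  finally show ?thesis .
qed

lemma matB_mult_vec_index:
  assumes i: "i < n - 1" and \<theta>: "\<theta> \<in> carrier_vec d"
  shows "(matB m n d \<phi> \<mu> *\<^sub>v \<theta>) $ i = (\<Sum>a\<in>{1..m}. \<mu> a * (\<phi> a (i + 2) \<bullet> \<theta> - \<phi> a 1 \<bullet> \<theta>))"
proof -
  have "(matB m n d \<phi> \<mu> *\<^sub>v \<theta>) $ i
      = (\<Sum>j<d. (\<Sum>a\<in>{1..m}. \<mu> a * (\<phi> a (i + 2) $ j - \<phi> a 1 $ j)) * \<theta> $ j)"
    using i carrier_vecD[OF \<theta>] by (simp add: matB_def scalar_prod_def atLeast0LessThan)
  also have "\<dots> = (\<Sum>a\<in>{1..m}. \<Sum>j<d. \<mu> a * ((\<phi> a (i + 2) $ j - \<phi> a 1 $ j) * \<theta> $ j))"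
    unfolding sum_distrib_right by (subst sum.swap) (simp add: mult.assoc)
  also have "\<dots> = (\<Sum>a\<in>{1..m}. \<mu> a * (\<phi> a (i + 2) \<bullet> \<theta> - \<phi> a 1 \<bullet> \<theta>))"
  proof (rule sum.cong[OF refl])
    fix a
    have "\<phi> a (i + 2) \<bullet> \<theta> - \<phi> a 1 \<bullet> \<theta> = (\<Sum>j<d. (\<phi> a (i + 2) $ j - \<phi> a 1 $ j) * \<theta> $ j)"
      using carrier_vecD[OF \<theta>]
      by (simp add: scalar_prod_def atLeast0LessThan left_diff_distrib sum_subtractf)
    then show "(\<Sum>j<d. \<mu> a * ((\<phi> a (i + 2) $ j - \<phi> a 1 $ j) * \<theta> $ j))
        = \<mu> a * (\<phi> a (i + 2) \<bullet> \<theta> - \<phi> a 1 \<bullet> \<theta>)"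
      by (simp add: sum_distrib_left)
  qed
  finally show ?thesis .
qed

definition lsq_mat :: "nat \<Rightarrow> nat \<Rightarrow> nat \<Rightarrow> (nat \<Rightarrow> nat \<Rightarrow> real vec) \<Rightarrow> (nat \<Rightarrow> real) \<Rightarrow> (nat \<Rightarrow> real)
    \<Rightarrow> real mat" where
  "lsq_mat m n d \<phi> \<mu> \<nu> = matA m n d \<phi> \<nu> @\<^sub>r matB m n d \<phi> \<mu>"

definition lsq_rhs :: "nat \<Rightarrow> nat \<Rightarrow> real \<Rightarrow> (nat \<Rightarrow> real) \<Rightarrow> (nat \<Rightarrow> real) \<Rightarrow> real vec" where
  "lsq_rhs m n \<eta> \<mu> \<nu> = vecc m \<eta> \<mu> @\<^sub>v vecd n \<eta> \<nu>"

lemma lsq_mat_carrier: "lsq_mat m n d \<phi> \<mu> \<nu> \<in> carrier_mat (m - 1 + (n - 1)) d"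
  unfolding lsq_mat_def using matA_carrier matB_carrier by (rule carrier_append_rows)

lemma lsq_rhs_carrier: "lsq_rhs m n \<eta> \<mu> \<nu> \<in> carrier_vec (m - 1 + (n - 1))"
  unfolding lsq_rhs_def vecd_eq_vecc using vecc_carrier vecc_carrier by (rule append_carrier_vec)

lemma is_lsq_min_iff_lsq_minimizer:
  "is_lsq_min m n d \<eta> \<phi> \<mu> \<nu> \<theta> \<longleftrightarrow> lsq_minimizer (lsq_mat m n d \<phi> \<mu> \<nu>) (lsq_rhs m n \<eta> \<mu> \<nu>) \<theta>"
proof -
  have "dim_col (lsq_mat m n d \<phi> \<mu> \<nu>) = d" using lsq_mat_carrier by (rule carrier_matD(2))
  then show ?thesis
    unfolding is_lsq_min_def lsq_obj_def lsq_minimizer_def lsq_mat_def lsq_rhs_def by simp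
qed

lemma QRE_matA_mult:
  assumes qre: "is_QRE m n \<eta> (\<lambda>a b. \<phi> a b \<bullet> \<theta>) \<mu> \<nu>" and \<eta>: "0 < \<eta>" and \<theta>: "\<theta> \<in> carrier_vec d"
  shows "matA m n d \<phi> \<nu> *\<^sub>v \<theta> = vecc m \<eta> \<mu>"
proof (rule eq_vecI)
  fix i assume "i < dim_vec (vecc m \<eta> \<mu>)"
  then have i: "i < m - 1" by (simp add: vecc_def)
  then have a: "i + 2 \<in> {1..m}" "1 \<in> {1..m}" by auto
  define s where "s a = (\<Sum>b\<in>{1..n}. (\<phi> a b \<bullet> \<theta>) * \<nu> b)" for a
  define Z where "Z = (\<Sum>a\<in>{1..m}. exp (\<eta> * s a))"
  have \<mu>: "\<mu> a = exp (\<eta> * s a) / Z" if "a \<in> {1..m}" for a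
    using QRE_max_player_eq[OF qre that] by (simp add: s_def Z_def)
  have "0 < Z" unfolding Z_def using a by (intro sum_pos) auto
  have "(matA m n d \<phi> \<nu> *\<^sub>v \<theta>) $ i = s (i + 2) - s 1"
    unfolding matA_mult_vec_index[OF i \<theta>] s_def
    by (simp add: algebra_simps flip: sum_subtractf)
  also have "\<dots> = ln (\<mu> (i + 2) / \<mu> 1) / \<eta>"
    unfolding \<mu>[OF a(1)] \<mu>[OF a(2)] using \<open>0 < Z\<close> \<eta> by (intro ln_softmax_ratio[symmetric]) auto
  also have "\<dots> = vecc m \<eta> \<mu> $ i" using i by (simp add: vecc_def)
  finally show "(matA m n d \<phi> \<nu> *\<^sub>v \<theta>) $ i = vecc m \<eta> \<mu> $ i" .
qed (simp add: vecc_def)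

lemma QRE_matB_mult:
  assumes qre: "is_QRE m n \<eta> (\<lambda>a b. \<phi> a b \<bullet> \<theta>) \<mu> \<nu>" and \<eta>: "0 < \<eta>" and \<theta>: "\<theta> \<in> carrier_vec d"
  shows "matB m n d \<phi> \<mu> *\<^sub>v \<theta> = vecd n \<eta> \<nu>"
proof (rule eq_vecI)
  fix i assume "i < dim_vec (vecd n \<eta> \<nu>)"
  then have i: "i < n - 1" by (simp add: vecd_def)
  then have b: "i + 2 \<in> {1..n}" "1 \<in> {1..n}" by auto
  define s where "s b = (\<Sum>a\<in>{1..m}. (\<phi> a b \<bullet> \<theta>) * \<mu> a)" for b
  define Z where "Z = (\<Sum>b\<in>{1..n}. exp (- \<eta> * s b))"
  have \<nu>: "\<nu> b = exp (- \<eta> * s b) / Z" if "b \<in> {1..n}" for b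
    using QRE_min_player_eq[OF qre that] by (simp add: s_def Z_def)
  have "0 < Z" unfolding Z_def using b by (intro sum_pos) auto
  have "(matB m n d \<phi> \<mu> *\<^sub>v \<theta>) $ i = s (i + 2) - s 1"
    unfolding matB_mult_vec_index[OF i \<theta>] s_def
    by (simp add: algebra_simps flip: sum_subtractf)
  also have "\<dots> = ln (\<nu> (i + 2) / \<nu> 1) / (- \<eta>)"
    unfolding \<nu>[OF b(1)] \<nu>[OF b(2)] using \<open>0 < Z\<close> \<eta> by (intro ln_softmax_ratio[symmetric]) auto
  also have "\<dots> = vecd n \<eta> \<nu> $ i" using i by (simp add: vecd_def)
  finally show "(matB m n d \<phi> \<mu> *\<^sub>v \<theta>) $ i = vecd n \<eta> \<nu> $ i" .
qed (simp add: vecd_def)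

lemma QRE_lsq_mat_mult:
  assumes "is_QRE m n \<eta> (\<lambda>a b. \<phi> a b \<bullet> \<theta>) \<mu> \<nu>" "0 < \<eta>" "\<theta> \<in> carrier_vec d"
  shows "lsq_mat m n d \<phi> \<mu> \<nu> *\<^sub>v \<theta> = lsq_rhs m n \<eta> \<mu> \<nu>"
  unfolding lsq_mat_def lsq_rhs_def mat_mult_append[OF matA_carrier matB_carrier assms(3)]
  using QRE_matA_mult[OF assms] QRE_matB_mult[OF assms] by simp

section \<open>Perturbation of the linear system\<close>

lemma TV_le_half_imp_sum_abs_le: "TV k \<mu>' \<mu> \<le> e / 2 \<Longrightarrow> (\<Sum>i\<in>{1..k}. \<bar>\<mu>' i - \<mu> i\<bar>) \<le> e"
  unfolding TV_def by simp

lemma TV_le_half_imp_close: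
  assumes "TV k \<mu>' \<mu> \<le> e / 2" "e \<le> q / 2" "\<forall>i\<in>{1..k}. q \<le> \<mu> i"
  shows "\<forall>i\<in>{1..k}. q / 2 \<le> \<mu>' i \<and> q / 2 \<le> \<mu> i \<and> \<bar>\<mu>' i - \<mu> i\<bar> \<le> e"
proof
  fix i assume i: "i \<in> {1..k}"
  have "\<bar>\<mu>' i - \<mu> i\<bar> \<le> (\<Sum>i\<in>{1..k}. \<bar>\<mu>' i - \<mu> i\<bar>)"
    using i by (intro member_le_sum) auto
  also have "\<dots> \<le> e" using TV_le_half_imp_sum_abs_le[OF assms(1)] .
  finally have "\<bar>\<mu>' i - \<mu> i\<bar> \<le> e" .
  moreover have "q \<le> \<mu> i" using assms(3) i by blast
  ultimately show "q / 2 \<le> \<mu>' i \<and> q / 2 \<le> \<mu> i \<and> \<bar>\<mu>' i - \<mu> i\<bar> \<le> e"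
    using assms(2) by (auto simp: abs_le_iff)
qed

lemma matA_diff_index_abs_le:
  assumes i: "i < m - 1" and j: "j < d"
    and \<phi>: "\<forall>a\<in>{1..m}. \<forall>b\<in>{1..n}. \<forall>j<d. \<bar>\<phi> a b $ j\<bar> \<le> P" and P: "0 \<le> P"
    and \<nu>: "(\<Sum>b\<in>{1..n}. \<bar>\<nu> b - \<nu>' b\<bar>) \<le> e"
  shows "\<bar>(matA m n d \<phi> \<nu> - matA m n d \<phi> \<nu>') $$ (i, j)\<bar> \<le> 2 * P * e"
proof -
  have a: "i + 2 \<in> {1..m}" "1 \<in> {1..m}" using i by auto
  have "(matA m n d \<phi> \<nu> - matA m n d \<phi> \<nu>') $$ (i, j)
      = (\<Sum>b\<in>{1..n}. (\<nu> b - \<nu>' b) * (\<phi> (i + 2) b $ j - \<phi> 1 b $ j))"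
    using i j by (simp add: matA_def left_diff_distrib flip: sum_subtractf)
  also have "\<bar>\<dots>\<bar> \<le> (\<Sum>b\<in>{1..n}. \<bar>\<nu> b - \<nu>' b\<bar>) * (2 * P)"
  proof (rule abs_sum_mult_le)
    fix b assume "b \<in> {1..n}"
    then have "\<bar>\<phi> (i + 2) b $ j\<bar> \<le> P" "\<bar>\<phi> 1 b $ j\<bar> \<le> P" using \<phi> a j by blast+
    then show "\<bar>\<phi> (i + 2) b $ j - \<phi> 1 b $ j\<bar> \<le> 2 * P" by linarith
  qed
  also have "\<dots> \<le> 2 * P * e" using \<nu> P by (simp add: mult.commute mult_left_mono)
  finally show ?thesis .
qed

lemma matB_diff_index_abs_le:
  assumes i: "i < n - 1" and j: "j < d"
    and \<phi>: "\<forall>a\<in>{1..m}. \<forall>b\<in>{1..n}. \<forall>j<d. \<bar>\<phi> a b $ j\<bar> \<le> P" and P: "0 \<le> P"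
    and \<mu>: "(\<Sum>a\<in>{1..m}. \<bar>\<mu> a - \<mu>' a\<bar>) \<le> e"
  shows "\<bar>(matB m n d \<phi> \<mu> - matB m n d \<phi> \<mu>') $$ (i, j)\<bar> \<le> 2 * P * e"
proof -
  have b: "i + 2 \<in> {1..n}" "1 \<in> {1..n}" using i by auto
  have "(matB m n d \<phi> \<mu> - matB m n d \<phi> \<mu>') $$ (i, j)
      = (\<Sum>a\<in>{1..m}. (\<mu> a - \<mu>' a) * (\<phi> a (i + 2) $ j - \<phi> a 1 $ j))"
    using i j by (simp add: matB_def left_diff_distrib flip: sum_subtractf)
  also have "\<bar>\<dots>\<bar> \<le> (\<Sum>a\<in>{1..m}. \<bar>\<mu> a - \<mu>' a\<bar>) * (2 * P)"
  proof (rule abs_sum_mult_le)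
    fix a assume "a \<in> {1..m}"
    then have "\<bar>\<phi> a (i + 2) $ j\<bar> \<le> P" "\<bar>\<phi> a 1 $ j\<bar> \<le> P" using \<phi> b j by blast+
    then show "\<bar>\<phi> a (i + 2) $ j - \<phi> a 1 $ j\<bar> \<le> 2 * P" by linarith
  qed
  also have "\<dots> \<le> 2 * P * e" using \<mu> P by (simp add: mult.commute mult_left_mono)
  finally show ?thesis .
qed

lemma lsq_mat_mult_diff:
  assumes \<theta>: "\<theta> \<in> carrier_vec d"
  shows "lsq_mat m n d \<phi> \<mu> \<nu> *\<^sub>v \<theta> - lsq_mat m n d \<phi> \<mu>' \<nu>' *\<^sub>v \<theta>
    = ((matA m n d \<phi> \<nu> - matA m n d \<phi> \<nu>') *\<^sub>v \<theta>) @\<^sub>v ((matB m n d \<phi> \<mu> - matB m n d \<phi> \<mu>') *\<^sub>v \<theta>)"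
proof -
  have "lsq_mat m n d \<phi> \<mu> \<nu> *\<^sub>v \<theta> - lsq_mat m n d \<phi> \<mu>' \<nu>' *\<^sub>v \<theta>
      = (matA m n d \<phi> \<nu> *\<^sub>v \<theta> - matA m n d \<phi> \<nu>' *\<^sub>v \<theta>) @\<^sub>v (matB m n d \<phi> \<mu> *\<^sub>v \<theta> - matB m n d \<phi> \<mu>' *\<^sub>v \<theta>)"
    unfolding lsq_mat_def mat_mult_append[OF matA_carrier matB_carrier \<theta>]
    by (rule append_vec_diff) (auto intro: carrier_vecI)
  then show ?thesis
    using minus_mult_distrib_mat_vec[OF matA_carrier matA_carrier \<theta>]
      minus_mult_distrib_mat_vec[OF matB_carrier matB_carrier \<theta>] by simp
qed

lemma lsq_mat_perturbation:
  assumes \<phi>: "\<forall>a\<in>{1..m}. \<forall>b\<in>{1..n}. \<forall>j<d. \<bar>\<phi> a b $ j\<bar> \<le> P" and P: "0 \<le> P"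
    and \<mu>: "(\<Sum>a\<in>{1..m}. \<bar>\<mu> a - \<mu>' a\<bar>) \<le> e1" and \<nu>: "(\<Sum>b\<in>{1..n}. \<bar>\<nu> b - \<nu>' b\<bar>) \<le> e2"
    and \<theta>: "\<theta> \<in> carrier_vec d"
  shows "sqnorm (lsq_mat m n d \<phi> \<mu> \<nu> *\<^sub>v \<theta> - lsq_mat m n d \<phi> \<mu>' \<nu>' *\<^sub>v \<theta>)
    \<le> 4 * P\<^sup>2 * real (m - 1 + (n - 1)) * real d * (e1\<^sup>2 + e2\<^sup>2) * sqnorm \<theta>"
proof -
  let ?N = "m - 1 + (n - 1)"
  have "sqnorm (lsq_mat m n d \<phi> \<mu> \<nu> *\<^sub>v \<theta> - lsq_mat m n d \<phi> \<mu>' \<nu>' *\<^sub>v \<theta>)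
      = sqnorm ((matA m n d \<phi> \<nu> - matA m n d \<phi> \<nu>') *\<^sub>v \<theta>)
        + sqnorm ((matB m n d \<phi> \<mu> - matB m n d \<phi> \<mu>') *\<^sub>v \<theta>)"
    unfolding lsq_mat_mult_diff[OF \<theta>] by (rule sqnorm_append_vec)
  also have "\<dots> \<le> real (m - 1) * real d * (2 * P * e2)\<^sup>2 * sqnorm \<theta>
      + real (n - 1) * real d * (2 * P * e1)\<^sup>2 * sqnorm \<theta>"
    using matA_diff_index_abs_le[OF _ _ \<phi> P \<nu>] matB_diff_index_abs_le[OF _ _ \<phi> P \<mu>]
    by (intro add_mono sqnorm_mult_mat_vec_le[OF _ \<theta>] minus_carrier_mat matA_carrier matB_carrier)
  also have "\<dots> \<le> real ?N * real d * (2 * P * e2)\<^sup>2 * sqnorm \<theta> + real ?N * real d * (2 * P * e1)\<^sup>2 * sqnorm \<theta>"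
    by (intro add_mono mult_right_mono) (auto simp: sqnorm_nonneg)
  also have "\<dots> = 4 * P\<^sup>2 * real ?N * real d * (e1\<^sup>2 + e2\<^sup>2) * sqnorm \<theta>"
    by (simp add: power_mult_distrib algebra_simps)
  finally show ?thesis .
qed

lemma vecc_diff_index_abs_le:
  assumes i: "i < m - 1" and \<eta>: "\<eta> \<noteq> 0" and q: "0 < q"
    and \<mu>: "\<forall>a\<in>{1..m}. q \<le> \<mu> a \<and> q \<le> \<mu>' a \<and> \<bar>\<mu> a - \<mu>' a\<bar> \<le> e"
  shows "\<bar>vecc m \<eta> \<mu> $ i - vecc m \<eta> \<mu>' $ i\<bar> \<le> 2 * e / (q * \<bar>\<eta>\<bar>)"
proof -
  have a: "i + 2 \<in> {1..m}" "1 \<in> {1..m}" using i by auto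
  have "vecc m \<eta> \<mu> $ i - vecc m \<eta> \<mu>' $ i = (ln (\<mu> (i + 2) / \<mu> 1) - ln (\<mu>' (i + 2) / \<mu>' 1)) / \<eta>"
    using i by (simp add: vecc_def diff_divide_distrib)
  then have "\<bar>vecc m \<eta> \<mu> $ i - vecc m \<eta> \<mu>' $ i\<bar> = \<bar>ln (\<mu> (i + 2) / \<mu> 1) - ln (\<mu>' (i + 2) / \<mu>' 1)\<bar> / \<bar>\<eta>\<bar>"
    by (simp add: abs_divide)
  also have "\<dots> \<le> (2 * e / q) / \<bar>\<eta>\<bar>"
    using \<mu> a by (intro divide_right_mono abs_ln_ratio_diff_le[OF q]) auto
  finally show ?thesis by simp
qed

lemma sqnorm_vecc_diff_le:
  assumes "\<eta> \<noteq> 0" "0 < q" "\<forall>a\<in>{1..m}. q \<le> \<mu> a \<and> q \<le> \<mu>' a \<and> \<bar>\<mu> a - \<mu>' a\<bar> \<le> e"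
  shows "sqnorm (vecc m \<eta> \<mu> - vecc m \<eta> \<mu>') \<le> 4 * real (m - 1) / (\<eta> * q)\<^sup>2 * e\<^sup>2"
proof -
  have "sqnorm (vecc m \<eta> \<mu> - vecc m \<eta> \<mu>') \<le> real (m - 1) * (2 * e / (q * \<bar>\<eta>\<bar>))\<^sup>2"
    by (rule sqnorm_diff_le_entrywise[OF vecc_carrier vecc_carrier vecc_diff_index_abs_le[OF _ assms]])
  also have "\<dots> = 4 * real (m - 1) / (\<eta> * q)\<^sup>2 * e\<^sup>2"
    by (simp add: power_divide power_mult_distrib ac_simps)
  finally show ?thesis .
qed

lemma lsq_rhs_perturbation:
  assumes \<eta>: "0 < \<eta>" and q: "0 < q"
    and \<mu>: "\<forall>a\<in>{1..m}. q \<le> \<mu> a \<and> q \<le> \<mu>' a \<and> \<bar>\<mu> a - \<mu>' a\<bar> \<le> e1"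
    and \<nu>: "\<forall>b\<in>{1..n}. q \<le> \<nu> b \<and> q \<le> \<nu>' b \<and> \<bar>\<nu> b - \<nu>' b\<bar> \<le> e2"
  shows "sqnorm (lsq_rhs m n \<eta> \<mu> \<nu> - lsq_rhs m n \<eta> \<mu>' \<nu>')
    \<le> 4 * real (m - 1 + (n - 1)) / (\<eta> * q)\<^sup>2 * (e1\<^sup>2 + e2\<^sup>2)"
proof -
  let ?N = "m - 1 + (n - 1)"
  have "sqnorm (lsq_rhs m n \<eta> \<mu> \<nu> - lsq_rhs m n \<eta> \<mu>' \<nu>')
      = sqnorm (vecc m \<eta> \<mu> - vecc m \<eta> \<mu>') + sqnorm (vecc n (- \<eta>) \<nu> - vecc n (- \<eta>) \<nu>')"
    unfolding lsq_rhs_def vecd_eq_vecc append_vec_diff[OF vecc_carrier vecc_carrier vecc_carrier vecc_carrier]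
    by (rule sqnorm_append_vec)
  also have "\<dots> \<le> 4 * real (m - 1) / (\<eta> * q)\<^sup>2 * e1\<^sup>2 + 4 * real (n - 1) / (\<eta> * q)\<^sup>2 * e2\<^sup>2"
  proof (rule add_mono)
    show "sqnorm (vecc m \<eta> \<mu> - vecc m \<eta> \<mu>') \<le> 4 * real (m - 1) / (\<eta> * q)\<^sup>2 * e1\<^sup>2"
      using \<eta> q \<mu> by (intro sqnorm_vecc_diff_le) auto
    have "(- \<eta> * q)\<^sup>2 = (\<eta> * q)\<^sup>2" by (simp add: power2_eq_square)
    then show "sqnorm (vecc n (- \<eta>) \<nu> - vecc n (- \<eta>) \<nu>') \<le> 4 * real (n - 1) / (\<eta> * q)\<^sup>2 * e2\<^sup>2"
      using sqnorm_vecc_diff_le[of "- \<eta>" q n \<nu> \<nu>' e2] \<eta> q \<nu> by simp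
  qed
  also have "\<dots> \<le> 4 * real ?N / (\<eta> * q)\<^sup>2 * e1\<^sup>2 + 4 * real ?N / (\<eta> * q)\<^sup>2 * e2\<^sup>2"
    by (intro add_mono mult_right_mono divide_right_mono) auto
  also have "\<dots> = 4 * real ?N / (\<eta> * q)\<^sup>2 * (e1\<^sup>2 + e2\<^sup>2)"
    by (simp add: distrib_left)
  finally show ?thesis .
qed

lemma lsq_estimate_near_QRE:
  assumes \<eta>: "0 < \<eta>" and \<theta>s: "\<theta>s \<in> carrier_vec d"
    and qre: "is_QRE m n \<eta> (\<lambda>a b. \<phi> a b \<bullet> \<theta>s) \<mu>s \<nu>s"
    and lam: "0 < lam" "\<forall>\<theta>\<in>carrier_vec d. lam * sqnorm \<theta> \<le> sqnorm (lsq_mat m n d \<phi> \<mu>s \<nu>s *\<^sub>v \<theta>)"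
    and p: "0 < p" "\<forall>a\<in>{1..m}. p \<le> \<mu>s a" "\<forall>b\<in>{1..n}. p \<le> \<nu>s b"
    and P: "\<forall>a\<in>{1..m}. \<forall>b\<in>{1..n}. \<forall>j<d. \<bar>\<phi> a b $ j\<bar> \<le> P" "0 \<le> P"
    and D: "D = 4 * P\<^sup>2 * real (m - 1 + (n - 1)) * real d"
    and E: "E = 16 * real (m - 1 + (n - 1)) / (\<eta> * p)\<^sup>2"
    and small: "e1 \<le> p / 2" "e2 \<le> p / 2" "D * (e1\<^sup>2 + e2\<^sup>2) \<le> lam / 8"
    and tv: "TV m \<mu>h \<mu>s \<le> e1 / 2" "TV n \<nu>h \<nu>s \<le> e2 / 2"
  shows "\<exists>!\<theta>. is_lsq_min m n d \<eta> \<phi> \<mu>h \<nu>h \<theta>"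
    and "is_lsq_min m n d \<eta> \<phi> \<mu>h \<nu>h \<theta>h \<Longrightarrow>
      sqnorm (\<theta>h - \<theta>s) \<le> 32 / lam * (D * sqnorm \<theta>s + E) * (e1\<^sup>2 + e2\<^sup>2)"
proof -
  let ?K = "lsq_mat m n d \<phi> \<mu>s \<nu>s" and ?Kh = "lsq_mat m n d \<phi> \<mu>h \<nu>h"
  let ?bh = "lsq_rhs m n \<eta> \<mu>h \<nu>h"
  have close: "\<forall>\<theta>\<in>carrier_vec d. sqnorm (?Kh *\<^sub>v \<theta> - ?K *\<^sub>v \<theta>) \<le> D * (e1\<^sup>2 + e2\<^sup>2) * sqnorm \<theta>"
    using lsq_mat_perturbation[OF P TV_le_half_imp_sum_abs_le[OF tv(1)] TV_le_half_imp_sum_abs_le[OF tv(2)]]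
    unfolding D by blast
  have "sqnorm (?bh - lsq_rhs m n \<eta> \<mu>s \<nu>s) \<le> 4 * real (m - 1 + (n - 1)) / (\<eta> * (p / 2))\<^sup>2 * (e1\<^sup>2 + e2\<^sup>2)"
    using p(1) by (intro lsq_rhs_perturbation[OF \<eta> _ TV_le_half_imp_close[OF tv(1) small(1) p(2)]
          TV_le_half_imp_close[OF tv(2) small(2) p(3)]]) simp
  also have "4 * real (m - 1 + (n - 1)) / (\<eta> * (p / 2))\<^sup>2 = E"
    unfolding E by (simp add: power_mult_distrib power_divide)
  finally have rhs: "sqnorm (?bh - ?K *\<^sub>v \<theta>s) \<le> E * (e1\<^sup>2 + e2\<^sup>2)"
    unfolding QRE_lsq_mat_mult[OF qre \<eta> \<theta>s] .
  note bound = lsq_perturbation_bound[OF lsq_mat_carrier lsq_mat_carrier lsq_rhs_carrier \<theta>s lam close small(3)]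
  show "\<exists>!\<theta>. is_lsq_min m n d \<eta> \<phi> \<mu>h \<nu>h \<theta>"
    unfolding is_lsq_min_iff_lsq_minimizer by (rule bound(1))
  assume "is_lsq_min m n d \<eta> \<phi> \<mu>h \<nu>h \<theta>h"
  then have "sqnorm (\<theta>h - \<theta>s) \<le> 32 / lam * (D * (e1\<^sup>2 + e2\<^sup>2) * sqnorm \<theta>s + sqnorm (?bh - ?K *\<^sub>v \<theta>s))"
    unfolding is_lsq_min_iff_lsq_minimizer by (rule bound(2))
  also have "\<dots> \<le> 32 / lam * (D * (e1\<^sup>2 + e2\<^sup>2) * sqnorm \<theta>s + E * (e1\<^sup>2 + e2\<^sup>2))"
    using rhs lam(1) by (intro mult_left_mono add_left_mono) auto
  also have "\<dots> = 32 / lam * (D * sqnorm \<theta>s + E) * (e1\<^sup>2 + e2\<^sup>2)"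
    by (simp add: algebra_simps add_divide_distrib)
  finally show "sqnorm (\<theta>h - \<theta>s) \<le> 32 / lam * (D * sqnorm \<theta>s + E) * (e1\<^sup>2 + e2\<^sup>2)" .
qed

lemma sum_squares_le_of_small:
  fixes D c x y :: real
  assumes "0 \<le> D" "0 \<le> c" "0 \<le> x" "x \<le> 1" "x \<le> c / (16 * D + 1)"
    "0 \<le> y" "y \<le> 1" "y \<le> c / (16 * D + 1)"
  shows "D * (x\<^sup>2 + y\<^sup>2) \<le> c / 8"
proof -
  have pos: "0 < 16 * D + 1" using assms(1) by simp
  have "x\<^sup>2 \<le> x" "y\<^sup>2 \<le> y"
    using mult_left_le_one_le[of x x] mult_left_le_one_le[of y y] assms by (simp_all add: power2_eq_square)
  then have "D * (x\<^sup>2 + y\<^sup>2) \<le> D * (2 * (c / (16 * D + 1)))"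
    using assms by (intro mult_left_mono) auto
  also have "\<dots> = c / 8 - c / (8 * (16 * D + 1))" using pos by (simp add: field_simps)
  also have "\<dots> \<le> c / 8" using assms(2) pos by simp
  finally show ?thesis .
qed

lemma lsq_stable_near_QRE:
  assumes \<eta>: "0 < \<eta>" and \<theta>s: "\<theta>s \<in> carrier_vec d"
    and qre: "is_QRE m n \<eta> (\<lambda>a b. \<phi> a b \<bullet> \<theta>s) \<mu>s \<nu>s"
    and lam: "0 < lam" "\<forall>\<theta>\<in>carrier_vec d. lam * sqnorm \<theta> \<le> sqnorm (lsq_mat m n d \<phi> \<mu>s \<nu>s *\<^sub>v \<theta>)"
  obtains \<epsilon>0 C where "0 < \<epsilon>0" "0 < C"
    "\<And>e1 e2 \<mu>h \<nu>h. 0 \<le> e1 \<Longrightarrow> e1 \<le> \<epsilon>0 \<Longrightarrow> 0 \<le> e2 \<Longrightarrow> e2 \<le> \<epsilon>0 \<Longrightarrow>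
      TV m \<mu>h \<mu>s \<le> e1 / 2 \<Longrightarrow> TV n \<nu>h \<nu>s \<le> e2 / 2 \<Longrightarrow>
      (\<exists>!\<theta>. is_lsq_min m n d \<eta> \<phi> \<mu>h \<nu>h \<theta>) \<and>
      (\<forall>\<theta>h. is_lsq_min m n d \<eta> \<phi> \<mu>h \<nu>h \<theta>h \<longrightarrow> sqnorm (\<theta>h - \<theta>s) \<le> C * (e1\<^sup>2 + e2\<^sup>2))"
proof -
  obtain p where p: "0 < p" "\<forall>a\<in>{1..m}. p \<le> \<mu>s a" "\<forall>b\<in>{1..n}. p \<le> \<nu>s b"
    using QRE_pos_lower_bound[OF qre] by blast
  obtain P where P: "\<forall>a\<in>{1..m}. \<forall>b\<in>{1..n}. \<forall>j<d. \<bar>\<phi> a b $ j\<bar> \<le> P" "0 \<le> P"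
    using finite_imp_abs_bounded[of "{1..m} \<times> {1..n} \<times> {..<d}" "\<lambda>(a, b, j). \<phi> a b $ j"] by force
  define D where "D = 4 * P\<^sup>2 * real (m - 1 + (n - 1)) * real d"
  define E where "E = 16 * real (m - 1 + (n - 1)) / (\<eta> * p)\<^sup>2"
  \<comment> \<open>\<open>\<epsilon>0 \<le> p / 2\<close> keeps the empirical strategies above \<open>p / 2\<close>, where the log-ratios are
    Lipschitz; \<open>\<epsilon>0 \<le> lam / (16 D + 1)\<close> keeps the perturbation of the matrix below \<open>lam / 8\<close>.\<close>
  define \<epsilon>0 where "\<epsilon>0 = min (p / 2) (min 1 (lam / (16 * D + 1)))"
  define C where "C = 32 / lam * (D * sqnorm \<theta>s + E) + 1"
  have "0 \<le> D" "0 \<le> 32 / lam * (D * sqnorm \<theta>s + E)"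
    using lam(1) sqnorm_nonneg[of \<theta>s] unfolding D_def E_def by simp_all
  have "(\<exists>!\<theta>. is_lsq_min m n d \<eta> \<phi> \<mu>h \<nu>h \<theta>) \<and>
      (\<forall>\<theta>h. is_lsq_min m n d \<eta> \<phi> \<mu>h \<nu>h \<theta>h \<longrightarrow> sqnorm (\<theta>h - \<theta>s) \<le> C * (e1\<^sup>2 + e2\<^sup>2))"
    if e: "0 \<le> e1" "e1 \<le> \<epsilon>0" "0 \<le> e2" "e2 \<le> \<epsilon>0"
      and tv: "TV m \<mu>h \<mu>s \<le> e1 / 2" "TV n \<nu>h \<nu>s \<le> e2 / 2" for e1 e2 \<mu>h \<nu>h
  proof -
    have "D * (e1\<^sup>2 + e2\<^sup>2) \<le> lam / 8"
      using e \<open>0 \<le> D\<close> lam(1) by (intro sum_squares_le_of_small) (auto simp: \<epsilon>0_def)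
    moreover have "e1 \<le> p / 2" "e2 \<le> p / 2" using e by (auto simp: \<epsilon>0_def)
    ultimately have small: "e1 \<le> p / 2" "e2 \<le> p / 2" "D * (e1\<^sup>2 + e2\<^sup>2) \<le> lam / 8" by auto
    note est = lsq_estimate_near_QRE[OF \<eta> \<theta>s qre lam p P D_def E_def small tv]
    show ?thesis
    proof (intro conjI allI impI)
      show "\<exists>!\<theta>. is_lsq_min m n d \<eta> \<phi> \<mu>h \<nu>h \<theta>" by (rule est(1))
      fix \<theta>h assume "is_lsq_min m n d \<eta> \<phi> \<mu>h \<nu>h \<theta>h"
      from est(2)[OF this] have "sqnorm (\<theta>h - \<theta>s) \<le> 32 / lam * (D * sqnorm \<theta>s + E) * (e1\<^sup>2 + e2\<^sup>2)" .
      also have "\<dots> \<le> C * (e1\<^sup>2 + e2\<^sup>2)" unfolding C_def by (intro mult_right_mono) auto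
      finally show "sqnorm (\<theta>h - \<theta>s) \<le> C * (e1\<^sup>2 + e2\<^sup>2)" .
    qed
  qed
  moreover have "0 < \<epsilon>0" "0 < C"
    using p(1) lam(1) \<open>0 \<le> D\<close> \<open>0 \<le> 32 / lam * (D * sqnorm \<theta>s + E)\<close> by (simp_all add: \<epsilon>0_def C_def)
  ultimately show thesis using that by blast
qed

theorem mainTheorem2:
  fixes m n d :: nat and \<eta> M :: real and \<phi> :: "nat \<Rightarrow> nat \<Rightarrow> real vec"
    and \<theta>s :: "real vec" and \<mu>s \<nu>s :: "nat \<Rightarrow> real"
  assumes "m \<ge> 2" and "n \<ge> 2" and "\<eta> > 0"
    and phi_dim: "\<forall>a\<in>{1..m}. \<forall>b\<in>{1..n}. \<phi> a b \<in> carrier_vec d"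
    and theta_dim: "\<theta>s \<in> carrier_vec d"
    and theta_bound: "sqnorm \<theta>s \<le> M"
    and qre: "is_QRE m n \<eta> (\<lambda>a b. \<phi> a b \<bullet> \<theta>s) \<mu>s \<nu>s"
    and rank: "vec_space.rank (m - 1 + (n - 1)) (matA m n d \<phi> \<nu>s @\<^sub>r matB m n d \<phi> \<mu>s) = d"
  shows "\<exists>\<epsilon>0 C. \<epsilon>0 > 0 \<and> C > 0 \<and>
    (\<forall>\<epsilon>1 \<epsilon>2 \<mu>h \<nu>h. 0 < \<epsilon>1 \<and> 0 < \<epsilon>2 \<and>
       (\<forall>a\<in>{1..m}. \<epsilon>1 < \<mu>s a) \<and> (\<forall>b\<in>{1..n}. \<epsilon>2 < \<nu>s b) \<and>
       \<epsilon>1 \<le> \<epsilon>0 \<and> \<epsilon>2 \<le> \<epsilon>0 \<and>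
       simplex m \<mu>h \<and> simplex n \<nu>h \<and>
       TV m \<mu>h \<mu>s \<le> \<epsilon>1 / 2 \<and> TV n \<nu>h \<nu>s \<le> \<epsilon>2 / 2 \<longrightarrow>
       (\<exists>!\<theta>. is_lsq_min m n d \<eta> \<phi> \<mu>h \<nu>h \<theta>) \<and>
       (\<forall>\<theta>h. is_lsq_min m n d \<eta> \<phi> \<mu>h \<nu>h \<theta>h \<longrightarrow>
          sqnorm (\<theta>h - \<theta>s) \<le> C * (\<epsilon>1\<^sup>2 * (1 + real m * (\<epsilon>2\<^sup>2 + 1))
                                      + \<epsilon>2\<^sup>2 * (1 + real n * (\<epsilon>1\<^sup>2 + 1)))))"
proof -
  have "\<And>v. v \<in> carrier_vec d \<Longrightarrow> lsq_mat m n d \<phi> \<mu>s \<nu>s *\<^sub>v v = 0\<^sub>v (m - 1 + (n - 1)) \<Longrightarrow> v = 0\<^sub>v d"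
    by (rule full_column_rank_mult_vec_eq_0[OF lsq_mat_carrier rank[folded lsq_mat_def]])
  then obtain lam where lam: "0 < lam"
      "\<forall>\<theta>\<in>carrier_vec d. lam * sqnorm \<theta> \<le> sqnorm (lsq_mat m n d \<phi> \<mu>s \<nu>s *\<^sub>v \<theta>)"
    using injective_mat_sqnorm_lower_bound[OF lsq_mat_carrier] by blast
  obtain \<epsilon>0 C where "0 < \<epsilon>0" "0 < C" and stable: "\<And>e1 e2 \<mu>h \<nu>h.
      0 \<le> e1 \<Longrightarrow> e1 \<le> \<epsilon>0 \<Longrightarrow> 0 \<le> e2 \<Longrightarrow> e2 \<le> \<epsilon>0 \<Longrightarrow>
      TV m \<mu>h \<mu>s \<le> e1 / 2 \<Longrightarrow> TV n \<nu>h \<nu>s \<le> e2 / 2 \<Longrightarrow>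
      (\<exists>!\<theta>. is_lsq_min m n d \<eta> \<phi> \<mu>h \<nu>h \<theta>) \<and>
      (\<forall>\<theta>h. is_lsq_min m n d \<eta> \<phi> \<mu>h \<nu>h \<theta>h \<longrightarrow> sqnorm (\<theta>h - \<theta>s) \<le> C * (e1\<^sup>2 + e2\<^sup>2))"
    using lsq_stable_near_QRE[OF \<open>\<eta> > 0\<close> theta_dim qre lam] by blast
  show ?thesis
  proof (rule exI[of _ \<epsilon>0], rule exI[of _ C], intro conjI[of "0 < \<epsilon>0"] conjI[of "0 < C"] allI impI)
    fix \<epsilon>1 \<epsilon>2 \<mu>h \<nu>h
    assume "0 < \<epsilon>1 \<and> 0 < \<epsilon>2 \<and> (\<forall>a\<in>{1..m}. \<epsilon>1 < \<mu>s a) \<and> (\<forall>b\<in>{1..n}. \<epsilon>2 < \<nu>s b) \<and>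
      \<epsilon>1 \<le> \<epsilon>0 \<and> \<epsilon>2 \<le> \<epsilon>0 \<and> simplex m \<mu>h \<and> simplex n \<nu>h \<and>
      TV m \<mu>h \<mu>s \<le> \<epsilon>1 / 2 \<and> TV n \<nu>h \<nu>s \<le> \<epsilon>2 / 2"
    then have "(\<exists>!\<theta>. is_lsq_min m n d \<eta> \<phi> \<mu>h \<nu>h \<theta>) \<and> (\<forall>\<theta>h. is_lsq_min m n d \<eta> \<phi> \<mu>h \<nu>h \<theta>h \<longrightarrow>
        sqnorm (\<theta>h - \<theta>s) \<le> C * (\<epsilon>1\<^sup>2 + \<epsilon>2\<^sup>2))"
      using stable[of \<epsilon>1 \<epsilon>2 \<mu>h \<nu>h] by simp
    moreover have "C * (\<epsilon>1\<^sup>2 + \<epsilon>2\<^sup>2) \<le> C * (\<epsilon>1\<^sup>2 * (1 + real m * (\<epsilon>2\<^sup>2 + 1)) + \<epsilon>2\<^sup>2 * (1 + real n * (\<epsilon>1\<^sup>2 + 1)))"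
      using \<open>0 < C\<close> by (intro mult_left_mono add_mono) (simp_all add: mult_le_cancel_left1)
    ultimately show "(\<exists>!\<theta>. is_lsq_min m n d \<eta> \<phi> \<mu>h \<nu>h \<theta>) \<and> (\<forall>\<theta>h. is_lsq_min m n d \<eta> \<phi> \<mu>h \<nu>h \<theta>h \<longrightarrow>
        sqnorm (\<theta>h - \<theta>s) \<le> C * (\<epsilon>1\<^sup>2 * (1 + real m * (\<epsilon>2\<^sup>2 + 1)) + \<epsilon>2\<^sup>2 * (1 + real n * (\<epsilon>1\<^sup>2 + 1))))"
      using order_trans by blast
  qed (use \<open>0 < \<epsilon>0\<close> \<open>0 < C\<close> in auto)
qed

end
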